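(* Let $p$ be an odd prime, $\mathfrak{g}$ a finite nilpotent Lie ring of $p$-power order, $f\in\mathfrak{g}^*$, and $\mathfrak{p}_1,\mathfrak{p}_2$ polarizations of $f$. Then there exists a chain of polarizations $\mathfrak{p}_1=\mathfrak{q}_1,\mathfrak{q}_2,\ldots,\mathfrak{q}_m=\mathfrak{p}_2$ of $f$ such that $\mathfrak{q}_i$ and $\mathfrak{q}_{i+1}$ are neighbors for every $i<m$.
   Context: A Lie ring is an abelian group with a biadditive bracket satisfying the Jacobi identity and $[x,x]=0$. $\mathfrak{g}^*=\mathrm{Hom}(\mathfrak{g},\mathbb{C}^\times)$. A polarization of $f$ is a Lie subring $\mathfrak{p}\subseteq\mathfrak{g}$ with $f([\mathfrak{p},\mathfrak{p}])=\{1\}$ that is maximal among all additive subgroups of $\mathfrak{g}$ with this property. Two polarizations $\mathfrak{p}_1,\mathfrak{p}_2$ of $f$ are neighbors if $[\mathfrak{p}_1,\mathfrak{p}_2]\subseteq\mathfrak{p}_1\cap\mathfrak{p}_2$. *)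

theory Defs
  imports Complex_Main "HOL-Computational_Algebra.Primes"
begin

definition lie_ring :: "('a::ab_group_add \<Rightarrow> 'a \<Rightarrow> 'a) \<Rightarrow> bool" where
  "lie_ring br \<longleftrightarrow>
     (\<forall>x y z. br (x + y) z = br x z + br y z) \<and>
     (\<forall>x y z. br x (y + z) = br x y + br x z) \<and>
     (\<forall>x y z. br x (br y z) + br y (br z x) + br z (br x y) = 0) \<and>
     (\<forall>x. br x x = 0)"

definition add_subgroup :: "'a::ab_group_add set \<Rightarrow> bool" where
  "add_subgroup S \<longleftrightarrow> 0 \<in> S \<and> (\<forall>x\<in>S. \<forall>y\<in>S. x + y \<in> S) \<and> (\<forall>x\<in>S. - x \<in> S)"

definition lie_bracket_set :: "('a::ab_group_add \<Rightarrow> 'a \<Rightarrow> 'a) \<Rightarrow> 'a set \<Rightarrow> 'a set \<Rightarrow> 'a set" where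
  "lie_bracket_set br A B =
     \<Inter>{S. add_subgroup S \<and> {br a b | a b. a \<in> A \<and> b \<in> B} \<subseteq> S}"

definition lie_subring :: "('a::ab_group_add \<Rightarrow> 'a \<Rightarrow> 'a) \<Rightarrow> 'a set \<Rightarrow> bool" where
  "lie_subring br S \<longleftrightarrow> add_subgroup S \<and> lie_bracket_set br S S \<subseteq> S"

fun lower_central :: "('a::ab_group_add \<Rightarrow> 'a \<Rightarrow> 'a) \<Rightarrow> nat \<Rightarrow> 'a set" where
  "lower_central br 0 = UNIV"
| "lower_central br (Suc k) = lie_bracket_set br UNIV (lower_central br k)"

definition nilpotent_lie :: "('a::ab_group_add \<Rightarrow> 'a \<Rightarrow> 'a) \<Rightarrow> bool" where
  "nilpotent_lie br \<longleftrightarrow> (\<exists>k. lower_central br k = {0})"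

definition dual_char :: "('a::ab_group_add \<Rightarrow> complex) \<Rightarrow> bool" where
  "dual_char f \<longleftrightarrow> (\<forall>x. f x \<noteq> 0) \<and> (\<forall>x y. f (x + y) = f x * f y)"

definition polarization ::
  "('a::ab_group_add \<Rightarrow> 'a \<Rightarrow> 'a) \<Rightarrow> ('a \<Rightarrow> complex) \<Rightarrow> 'a set \<Rightarrow> bool" where
  "polarization br f P \<longleftrightarrow>
     lie_subring br P \<and> f ` (lie_bracket_set br P P) = {1} \<and>
     (\<forall>Q. add_subgroup Q \<and> f ` (lie_bracket_set br Q Q) = {1} \<and> P \<subseteq> Q \<longrightarrow> Q = P)"

definition neighbors :: "('a::ab_group_add \<Rightarrow> 'a \<Rightarrow> 'a) \<Rightarrow> 'a set \<Rightarrow> 'a set \<Rightarrow> bool" where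
  "neighbors br P1 P2 \<longleftrightarrow> lie_bracket_set br P1 P2 \<subseteq> P1 \<inter> P2"

end

theory Submission
  imports Defs
begin

text \<open>Polarizations are compared inside a Lie subring \<open>G\<close> modulo an ideal \<open>I\<close> of \<open>G\<close> on which
  \<open>f\<close> is trivial, by induction on \<open>|G| - |I|\<close>. If some \<open>z \<notin> I\<close> is central in \<open>G\<close> modulo \<open>I\<close>
  and \<open>f z = 1\<close>, then \<open>z\<close> can be added to \<open>I\<close> without changing the polarizations of \<open>G\<close>.
  Otherwise either \<open>G\<close> is central modulo \<open>I\<close>, and \<open>G\<close> is its own only polarization, or
  nilpotency provides a non-central \<open>y\<close> with \<open>[y, G]\<close> central, and
  \<open>G\<^sub>0 = {x \<in> G. [y, x] \<in> I}\<close> is smaller than \<open>G\<close>. Every polarization \<open>P\<close> of \<open>G\<close> is a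
  neighbor of the polarization \<open>\<langle>y, P \<inter> G\<^sub>0\<rangle>\<close> of \<open>G\<^sub>0\<close>, and polarizations of \<open>G\<^sub>0\<close> are
  polarizations of \<open>G\<close>, so a chain in \<open>G\<^sub>0\<close> joins any two polarizations of \<open>G\<close>. Maximality of
  \<open>\<langle>y, P \<inter> G\<^sub>0\<rangle>\<close> rests on the fact that a character of a finite abelian group that is trivial on
  the kernel of a character \<open>\<chi>\<close> is a power of \<open>\<chi>\<close>.\<close>

section \<open>Additive subgroups and characters\<close>

lemma add_subgroup_hull: "add_subgroup (add_subgroup hull S)"
  by (rule hull_in) (auto simp: add_subgroup_def)

lemma lie_bracket_set_eq_hull:
  "lie_bracket_set br A B = add_subgroup hull {br a b | a b. a \<in> A \<and> b \<in> B}"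
  by (simp add: lie_bracket_set_def hull_def)

lemma add_subgroup_zero: "add_subgroup S \<Longrightarrow> 0 \<in> S"
  and add_subgroup_add: "add_subgroup S \<Longrightarrow> x \<in> S \<Longrightarrow> y \<in> S \<Longrightarrow> x + y \<in> S"
  and add_subgroup_minus: "add_subgroup S \<Longrightarrow> x \<in> S \<Longrightarrow> - x \<in> S"
  by (auto simp: add_subgroup_def)

lemma add_subgroup_diff: "add_subgroup S \<Longrightarrow> x \<in> S \<Longrightarrow> y \<in> S \<Longrightarrow> x - y \<in> S"
  using add_subgroup_add[of S x "- y"] add_subgroup_minus[of S y] by simp

lemma add_subgroup_Int: "add_subgroup S \<Longrightarrow> add_subgroup T \<Longrightarrow> add_subgroup (S \<inter> T)"
  by (auto simp: add_subgroup_def)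

text \<open>Class \<open>ab_group_add\<close> provides no scaling by naturals.\<close>
fun nat_scale :: "nat \<Rightarrow> 'a::ab_group_add \<Rightarrow> 'a" where
  "nat_scale 0 x = 0"
| "nat_scale (Suc n) x = x + nat_scale n x"

lemma add_subgroup_nat_scale: "add_subgroup S \<Longrightarrow> x \<in> S \<Longrightarrow> nat_scale n x \<in> S"
  by (induction n) (auto intro: add_subgroup_zero add_subgroup_add)

lemma bracket_mem_lie_bracket_set: "a \<in> A \<Longrightarrow> b \<in> B \<Longrightarrow> br a b \<in> lie_bracket_set br A B"
  unfolding lie_bracket_set_eq_hull by (rule hull_inc) blast

lemma lie_bracket_set_subset:
  "add_subgroup R \<Longrightarrow> (\<And>a b. a \<in> A \<Longrightarrow> b \<in> B \<Longrightarrow> br a b \<in> R) \<Longrightarrow> lie_bracket_set br A B \<subseteq> R"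
  unfolding lie_bracket_set_eq_hull by (rule hull_minimal) auto

lemma dual_char_nonzero: "dual_char \<chi> \<Longrightarrow> \<chi> x \<noteq> 0"
  and dual_char_add: "dual_char \<chi> \<Longrightarrow> \<chi> (x + y) = \<chi> x * \<chi> y"
  by (auto simp: dual_char_def)

lemma dual_char_zero:
  assumes "dual_char \<chi>" shows "\<chi> 0 = 1"
  using dual_char_add[OF assms, of 0 0] dual_char_nonzero[OF assms, of 0] by simp

lemma dual_char_minus:
  assumes "dual_char \<chi>" shows "\<chi> (- x) = inverse (\<chi> x)"
  using dual_char_add[OF assms, of x "- x"] dual_char_zero[OF assms] dual_char_nonzero[OF assms, of x]
  by (simp add: field_simps)

lemma dual_char_diff:
  assumes "dual_char \<chi>" shows "\<chi> (x - y) = \<chi> x / \<chi> y"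
  using dual_char_add[OF assms, of x "- y"] dual_char_minus[OF assms, of y]
  by (simp add: divide_inverse)

lemma dual_char_nat_scale: "dual_char \<chi> \<Longrightarrow> \<chi> (nat_scale n x) = \<chi> x ^ n"
  by (induction n) (simp_all add: dual_char_zero dual_char_add)

lemma add_subgroup_dual_char_kernel: "dual_char \<chi> \<Longrightarrow> add_subgroup {x. \<chi> x = 1}"
  by (auto simp: add_subgroup_def dual_char_zero dual_char_add dual_char_minus)

lemma dual_char_image_lie_bracket_set:
  assumes "dual_char \<chi>" and "\<And>a b. a \<in> A \<Longrightarrow> b \<in> B \<Longrightarrow> \<chi> (br a b) = 1"
  shows "\<chi> ` lie_bracket_set br A B = {1}"
proof -
  have "lie_bracket_set br A B \<subseteq> {x. \<chi> x = 1}"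
    using assms by (intro lie_bracket_set_subset add_subgroup_dual_char_kernel) auto
  moreover have "0 \<in> lie_bracket_set br A B"
    unfolding lie_bracket_set_eq_hull by (rule add_subgroup_zero[OF add_subgroup_hull])
  ultimately show ?thesis using dual_char_zero[OF assms(1)] by (auto intro: rev_image_eqI)
qed

lemma pow_card_eq_1_if_mult_image_eq:
  fixes H :: "'a::field set"
  assumes H: "finite H" "0 \<notin> H" and w: "w \<in> H" and shift: "(\<lambda>h. w * h) ` H = H"
  shows "w ^ card H = 1"
proof -
  have inj: "inj_on (\<lambda>h. w * h) H" using w H(2) by (auto simp: inj_on_def)
  have "prod id H = prod id ((\<lambda>h. w * h) ` H)" using shift by simp
  also have "\<dots> = w ^ card H * prod id H" by (simp add: prod.reindex[OF inj] prod.distrib)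
  finally have "prod id H * 1 = prod id H * w ^ card H" by simp
  moreover have "prod id H \<noteq> 0" using H by (auto simp: prod_zero_iff)
  ultimately show ?thesis by simp
qed

lemma root_of_unity_eq_cis_power:
  assumes "m > 0" and "w ^ m = (1::complex)"
  shows "\<exists>k. w = cis (2 * pi / real m) ^ k"
proof -
  obtain k where "w = cis (2 * pi * real k / real m)"
    using assms bij_betw_roots_unity[OF assms(1)] unfolding bij_betw_def by auto
  also have "\<dots> = cis (2 * pi / real m) ^ k" by (simp add: DeMoivre mult_ac)
  finally show ?thesis by blast
qed

lemma dual_char_image_eq_roots_of_unity:
  assumes \<chi>: "dual_char \<chi>" and P: "add_subgroup P" "finite P"
  shows "\<chi> ` P = {z. z ^ card (\<chi> ` P) = 1}"
proof (rule card_subset_eq)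
  let ?m = "card (\<chi> ` P)"
  have "?m > 0" using P add_subgroup_zero[OF P(1)] by (auto simp: card_gt_0_iff)
  then show "finite {z::complex. z ^ ?m = 1}" and "card (\<chi> ` P) = card {z::complex. z ^ ?m = 1}"
    by (simp_all add: finite_roots_unity card_roots_unity_eq)
  show "\<chi> ` P \<subseteq> {z. z ^ ?m = 1}"
  proof
    fix w assume "w \<in> \<chi> ` P"
    then obtain a where a: "a \<in> P" "w = \<chi> a" by blast
    have "(\<lambda>h. w * h) ` \<chi> ` P = \<chi> ` (\<lambda>b. a + b) ` P"
      using a by (auto simp: image_image dual_char_add[OF \<chi>])
    also have "(\<lambda>b. a + b) ` P = P"
    proof
      show "(\<lambda>b. a + b) ` P \<subseteq> P" using a P(1) by (auto intro: add_subgroup_add)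
      show "P \<subseteq> (\<lambda>b. a + b) ` P"
      proof
        fix b assume "b \<in> P"
        then have "b - a \<in> P" using a P(1) by (simp add: add_subgroup_diff)
        then show "b \<in> (\<lambda>b. a + b) ` P" by (rule rev_image_eqI) simp
      qed
    qed
    finally have "(\<lambda>h. w * h) ` \<chi> ` P = \<chi> ` P" .
    moreover have "0 \<notin> \<chi> ` P" using dual_char_nonzero[OF \<chi>] by auto
    ultimately show "w \<in> {z. z ^ ?m = 1}"
      using pow_card_eq_1_if_mult_image_eq[of "\<chi> ` P" w] P(2) \<open>w \<in> \<chi> ` P\<close> by simp
  qed
qed

lemma dual_char_eq_power_on_subgroup:
  assumes \<chi>: "dual_char \<chi>" and \<psi>: "dual_char \<psi>" and P: "add_subgroup P" "finite P"
    and ker: "\<And>a. a \<in> P \<Longrightarrow> \<chi> a = 1 \<Longrightarrow> \<psi> a = 1"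
  shows "\<exists>j. \<forall>a\<in>P. \<psi> a = \<chi> a ^ j"
proof -
  define m where "m = card (\<chi> ` P)"
  define \<zeta> where "\<zeta> = cis (2 * pi / real m)"
  have roots: "\<chi> ` P = {z. z ^ m = 1}"
    unfolding m_def by (rule dual_char_image_eq_roots_of_unity[OF \<chi> P])
  have m: "m > 0" using P add_subgroup_zero[OF P(1)] by (auto simp: m_def card_gt_0_iff)
  have "\<zeta> ^ m = 1" using m by (simp add: \<zeta>_def DeMoivre)
  then have "\<zeta> \<in> \<chi> ` P" using roots by simp
  then obtain x where x: "x \<in> P" "\<chi> x = \<zeta>" by force
  have "\<psi> x ^ m = 1"
    using ker[OF add_subgroup_nat_scale[OF P(1) x(1)]] x \<open>\<zeta> ^ m = 1\<close>
    by (simp add: dual_char_nat_scale[OF \<chi>] dual_char_nat_scale[OF \<psi>])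
  then obtain j where j: "\<psi> x = \<zeta> ^ j" using root_of_unity_eq_cis_power[OF m] \<zeta>_def by blast
  have "\<psi> a = \<chi> a ^ j" if a: "a \<in> P" for a
  proof -
    have "\<chi> a ^ m = 1" using a roots by blast
    then obtain k where k: "\<chi> a = \<zeta> ^ k" using root_of_unity_eq_cis_power[OF m] \<zeta>_def by blast
    have "a - nat_scale k x \<in> P"
      using a add_subgroup_nat_scale[OF P(1) x(1)] P(1) by (simp add: add_subgroup_diff)
    moreover have "\<chi> (a - nat_scale k x) = 1"
      using k x dual_char_nonzero[OF \<chi>, of a]
      by (simp add: dual_char_diff[OF \<chi>] dual_char_nat_scale[OF \<chi>])
    ultimately have "\<psi> (a - nat_scale k x) = 1" by (rule ker)
    then have "\<psi> a = \<psi> x ^ k"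
      using dual_char_nonzero[OF \<psi>, of "nat_scale k x"]
      by (simp add: dual_char_diff[OF \<psi>] dual_char_nat_scale[OF \<psi>])
    then show ?thesis using j k by (simp add: power_mult[symmetric] mult.commute)
  qed
  then show ?thesis by blast
qed

lemma rtranclp_imp_chain:
  assumes "r\<^sup>*\<^sup>* x z"
  shows "\<exists>xs. xs \<noteq> [] \<and> hd xs = x \<and> last xs = z \<and> set xs \<subseteq> {w. r\<^sup>*\<^sup>* x w} \<and>
           (\<forall>i. Suc i < length xs \<longrightarrow> r (xs ! i) (xs ! Suc i))"
  using assms
proof (induction rule: converse_rtranclp_induct)
  case base
  show ?case by (intro exI[of _ "[z]"]) simp
next
  case (step x y)
  then obtain ys where ys: "ys \<noteq> []" "hd ys = y" "last ys = z" "set ys \<subseteq> {w. r\<^sup>*\<^sup>* y w}"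
    "\<forall>i. Suc i < length ys \<longrightarrow> r (ys ! i) (ys ! Suc i)" by blast
  have "r ((x # ys) ! i) ((x # ys) ! Suc i)" if "Suc i < length (x # ys)" for i
    using that ys step(1) by (cases i) (auto simp: hd_conv_nth)
  moreover have "set (x # ys) \<subseteq> {w. r\<^sup>*\<^sup>* x w}"
    using ys(4) step(1) by (auto intro: converse_rtranclp_into_rtranclp)
  ultimately show ?case using ys by (intro exI[of _ "x # ys"]) auto
qed

locale lie_bracket_ring =
  fixes br :: "'a::ab_group_add \<Rightarrow> 'a \<Rightarrow> 'a"
  assumes lie_ring: "lie_ring br"
begin

lemma bracket_add_left: "br (x + y) z = br x z + br y z"
  and bracket_add_right: "br x (y + z) = br x y + br x z"
  and bracket_self [simp]: "br x x = 0"
  and jacobi: "br x (br y z) + br y (br z x) + br z (br x y) = 0"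
  using lie_ring unfolding lie_ring_def by blast+

lemma bracket_zero_left [simp]: "br 0 x = 0"
  using bracket_add_left[of 0 0 x] by simp

lemma bracket_zero_right [simp]: "br x 0 = 0"
  using bracket_add_right[of x 0 0] by simp

lemma bracket_minus_left: "br (- x) y = - br x y"
  using bracket_add_left[of x "- x" y] by (simp add: neg_eq_iff_add_eq_0[symmetric])

lemma bracket_minus_right: "br x (- y) = - br x y"
  using bracket_add_right[of x y "- y"] by (simp add: neg_eq_iff_add_eq_0[symmetric])

lemma bracket_diff_left: "br (x - y) z = br x z - br y z"
  using bracket_add_left[of x "- y" z] by (simp add: bracket_minus_left)

lemma bracket_antisym: "br y x = - br x y"
  using bracket_add_left[of x y "x + y"] by (simp add: bracket_add_right neg_eq_iff_add_eq_0[symmetric])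

lemma bracket_leibniz: "br x (br y z) = br (br x y) z + br y (br x z)"
proof -
  have "br y (br z x) = - br y (br x z)"
    by (simp add: bracket_antisym[of z x] bracket_minus_right)
  moreover have "br z (br x y) = - br (br x y) z" by (rule bracket_antisym)
  ultimately show ?thesis
    using jacobi[of x y z] by (simp add: algebra_simps)
qed

lemma bracket_nat_scale_left: "br (nat_scale n x) y = nat_scale n (br x y)"
  by (induction n) (simp_all add: bracket_add_left)

lemma bracket_mem_swap: "add_subgroup R \<Longrightarrow> br x y \<in> R \<Longrightarrow> br y x \<in> R"
  by (metis bracket_antisym add_subgroup_minus)

lemma add_subgroup_bracket_preimage_left: "add_subgroup R \<Longrightarrow> add_subgroup {x. br x y \<in> R}"
  and add_subgroup_bracket_preimage_right: "add_subgroup R \<Longrightarrow> add_subgroup {y. br x y \<in> R}"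
  by (auto simp: add_subgroup_def bracket_add_left bracket_add_right
      bracket_minus_left bracket_minus_right)

lemma bracket_hull_mem:
  assumes R: "add_subgroup R" and gen: "\<And>s t. s \<in> S \<Longrightarrow> t \<in> S \<Longrightarrow> br s t \<in> R"
    and a: "a \<in> add_subgroup hull S" and b: "b \<in> add_subgroup hull S"
  shows "br a b \<in> R"
proof -
  have "br a t \<in> R" if "t \<in> S" for t
    using hull_induct[OF a, of "\<lambda>x. br x t \<in> R"] gen that
      add_subgroup_bracket_preimage_left[OF R] by blast
  then show ?thesis
    using hull_induct[OF b, of "\<lambda>y. br a y \<in> R"] add_subgroup_bracket_preimage_right[OF R] by blast
qed

lemma bracket_hull_insert_mem:
  assumes R: "add_subgroup R"
    and y: "\<And>s. s \<in> S \<Longrightarrow> br y s \<in> R" and gen: "\<And>s t. s \<in> S \<Longrightarrow> t \<in> S \<Longrightarrow> br s t \<in> R"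
    and a: "a \<in> add_subgroup hull insert y S" and b: "b \<in> add_subgroup hull insert y S"
  shows "br a b \<in> R"
proof (rule bracket_hull_mem[OF R _ a b])
  fix s t assume "s \<in> insert y S" "t \<in> insert y S"
  then consider "s = y" "t = y" | "s = y" "t \<in> S" | "s \<in> S" "t = y" | "s \<in> S" "t \<in> S"
    by blast
  then show "br s t \<in> R"
  proof cases
    case 3
    then show ?thesis using bracket_mem_swap[OF R y] by simp
  qed (simp_all add: y gen add_subgroup_zero[OF R])
qed

lemma neighbors_sym:
  assumes "neighbors br P Q" "add_subgroup P" "add_subgroup Q"
  shows "neighbors br Q P"
  unfolding neighbors_def
proof (rule lie_bracket_set_subset)
  show "add_subgroup (Q \<inter> P)" using assms(2,3) by (rule add_subgroup_Int[rotated])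
  fix a b assume "a \<in> Q" "b \<in> P"
  then have "br b a \<in> Q \<inter> P"
    using assms(1) bracket_mem_lie_bracket_set[of b P a Q br] unfolding neighbors_def by blast
  then show "br a b \<in> Q \<inter> P" by (rule bracket_mem_swap[OF \<open>add_subgroup (Q \<inter> P)\<close>])
qed

end

section \<open>Polarizations relative to a Lie subring\<close>

locale lie_character = lie_bracket_ring br for br :: "'a::ab_group_add \<Rightarrow> 'a \<Rightarrow> 'a" +
  fixes f :: "'a \<Rightarrow> complex"
  assumes dual_char: "dual_char f"
begin

lemma dual_char_bracket: "dual_char (\<lambda>x. f (br a x))"
  using dual_char unfolding dual_char_def by (simp add: bracket_add_right)

lemma f_bracket_swap: "f (br b a) = 1 \<longleftrightarrow> f (br a b) = 1"
  by (simp add: bracket_antisym[of b a] dual_char_minus[OF dual_char])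

definition rel_polarization :: "'a set \<Rightarrow> 'a set \<Rightarrow> bool" where
  "rel_polarization G P \<longleftrightarrow> P \<subseteq> G \<and> add_subgroup P \<and>
     (\<forall>a\<in>P. \<forall>b\<in>P. br a b \<in> P \<and> f (br a b) = 1) \<and>
     (\<forall>x\<in>G. (\<forall>a\<in>P. f (br a x) = 1) \<longrightarrow> x \<in> P)"

definition isotropic_ideal :: "'a set \<Rightarrow> 'a set \<Rightarrow> bool" where
  "isotropic_ideal G I \<longleftrightarrow> add_subgroup G \<and> (\<forall>a\<in>G. \<forall>b\<in>G. br a b \<in> G) \<and>
     add_subgroup I \<and> I \<subseteq> G \<and> (\<forall>x\<in>G. \<forall>i\<in>I. br x i \<in> I) \<and> (\<forall>i\<in>I. f i = 1)"

definition rel_center :: "'a set \<Rightarrow> 'a set \<Rightarrow> 'a set" where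
  "rel_center G I = {z\<in>G. \<forall>x\<in>G. br z x \<in> I}"

definition rel_centralizer :: "'a \<Rightarrow> 'a set \<Rightarrow> 'a set \<Rightarrow> 'a set" where
  "rel_centralizer y G I = {x\<in>G. br y x \<in> I}"

definition polarization_neighbors :: "'a set \<Rightarrow> 'a set \<Rightarrow> 'a set \<Rightarrow> bool" where
  "polarization_neighbors G P Q \<longleftrightarrow>
     rel_polarization G P \<and> rel_polarization G Q \<and> neighbors br P Q"

lemma rel_polarization_UNIV_if_polarization:
  assumes "polarization br f P"
  shows "rel_polarization UNIV P"
proof -
  have P: "add_subgroup P" "lie_bracket_set br P P \<subseteq> P" "f ` lie_bracket_set br P P = {1}"
    and max: "\<And>Q. add_subgroup Q \<Longrightarrow> f ` lie_bracket_set br Q Q = {1} \<Longrightarrow> P \<subseteq> Q \<Longrightarrow> Q = P"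
    using assms unfolding polarization_def lie_subring_def by auto
  have closed: "br a b \<in> P \<and> f (br a b) = 1" if "a \<in> P" "b \<in> P" for a b
    using bracket_mem_lie_bracket_set[OF that, of br] P(2,3) by blast
  have "x \<in> P" if x: "\<forall>a\<in>P. f (br a x) = 1" for x
  proof -
    let ?Q = "add_subgroup hull insert x P"
    have "br a b \<in> {w. f w = 1}" if "a \<in> ?Q" "b \<in> ?Q" for a b
      using bracket_hull_insert_mem[OF add_subgroup_dual_char_kernel[OF dual_char] _ _ that]
        x closed by (simp add: f_bracket_swap)
    then have "f ` lie_bracket_set br ?Q ?Q = {1}"
      by (intro dual_char_image_lie_bracket_set[OF dual_char]) auto
    moreover have "insert x P \<subseteq> ?Q" by (rule hull_subset)
    ultimately have "?Q = P" using max[OF add_subgroup_hull] by blast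
    then show "x \<in> P" using \<open>insert x P \<subseteq> ?Q\<close> by blast
  qed
  then show ?thesis using P(1) closed unfolding rel_polarization_def by blast
qed

lemma polarization_if_rel_polarization_UNIV:
  assumes "rel_polarization UNIV P"
  shows "polarization br f P"
proof -
  have P: "add_subgroup P" "\<And>a b. a \<in> P \<Longrightarrow> b \<in> P \<Longrightarrow> br a b \<in> P \<and> f (br a b) = 1"
    and max: "\<And>x. \<forall>a\<in>P. f (br a x) = 1 \<Longrightarrow> x \<in> P"
    using assms unfolding rel_polarization_def by blast+
  have "Q = P" if Q: "f ` lie_bracket_set br Q Q = {1}" "P \<subseteq> Q" for Q
  proof (rule subset_antisym[OF _ Q(2)], rule subsetI)
    fix x assume "x \<in> Q"
    have "f (br a x) = 1" if "a \<in> P" for a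
    proof -
      have "br a x \<in> lie_bracket_set br Q Q"
        using \<open>a \<in> P\<close> \<open>x \<in> Q\<close> Q(2) by (intro bracket_mem_lie_bracket_set) auto
      then have "f (br a x) \<in> f ` lie_bracket_set br Q Q" by (rule imageI)
      then show ?thesis using Q(1) by simp
    qed
    then show "x \<in> P" by (intro max) blast
  qed
  moreover have "lie_bracket_set br P P \<subseteq> P"
    using P by (intro lie_bracket_set_subset) auto
  moreover have "f ` lie_bracket_set br P P = {1}"
    using P by (intro dual_char_image_lie_bracket_set[OF dual_char]) auto
  ultimately show ?thesis unfolding polarization_def lie_subring_def using P(1) by simp
qed

lemma polarization_iff_rel_polarization_UNIV:
  "polarization br f P \<longleftrightarrow> rel_polarization UNIV P"
  using rel_polarization_UNIV_if_polarization polarization_if_rel_polarization_UNIV by blast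

lemma isotropic_ideal_UNIV_zero: "isotropic_ideal UNIV {0}"
  by (simp add: isotropic_ideal_def add_subgroup_def dual_char_zero[OF dual_char])

lemma rel_polarization_rtranclp_polarization_neighbors:
  "(polarization_neighbors G)\<^sup>*\<^sup>* P Q \<Longrightarrow> rel_polarization G P \<Longrightarrow> rel_polarization G Q"
  by (induction rule: rtranclp_induct) (auto simp: polarization_neighbors_def)

lemma rel_center_subset_rel_polarization:
  assumes I: "\<forall>i\<in>I. f i = 1" and P: "rel_polarization G P"
  shows "rel_center G I \<subseteq> P"
proof
  fix z assume z: "z \<in> rel_center G I"
  have "f (br a z) = 1" if "a \<in> P" for a
  proof -
    have "br z a \<in> I" using z that P unfolding rel_center_def rel_polarization_def by blast
    then show ?thesis using I f_bracket_swap[of z a] by blast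
  qed
  then show "z \<in> P" using z P unfolding rel_center_def rel_polarization_def by blast
qed

lemma ideal_subset_rel_center:
  assumes "isotropic_ideal G I" shows "I \<subseteq> rel_center G I"
proof
  fix i assume i: "i \<in> I"
  have "br i x \<in> I" if "x \<in> G" for x
    using assms i that bracket_mem_swap[of I x i] unfolding isotropic_ideal_def by blast
  then show "i \<in> rel_center G I" using assms i unfolding isotropic_ideal_def rel_center_def by blast
qed

lemma add_subgroup_rel_center:
  assumes "isotropic_ideal G I" shows "add_subgroup (rel_center G I)"
  using assms unfolding isotropic_ideal_def rel_center_def add_subgroup_def
  by (auto simp: bracket_add_left bracket_minus_left)

lemma rel_polarization_eq_if_central:
  assumes "isotropic_ideal G I" "G \<subseteq> rel_center G I" "rel_polarization G P"
  shows "P = G"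
  using rel_center_subset_rel_polarization[of I G P] assms
  unfolding isotropic_ideal_def rel_polarization_def by blast

lemma isotropic_ideal_hull_insert:
  assumes ideal: "isotropic_ideal G I" and z: "z \<in> rel_center G I" "f z = 1"
  shows "isotropic_ideal G (add_subgroup hull insert z I)"
proof -
  let ?J = "add_subgroup hull insert z I"
  have G: "add_subgroup G" "\<forall>a\<in>G. \<forall>b\<in>G. br a b \<in> G"
    and I: "add_subgroup I" "I \<subseteq> G" "\<forall>x\<in>G. \<forall>i\<in>I. br x i \<in> I" "\<forall>i\<in>I. f i = 1"
    using ideal unfolding isotropic_ideal_def by blast+
  have zG: "z \<in> G" using z(1) unfolding rel_center_def by blast
  have "br x z \<in> I" if "x \<in> G" for x
    using z(1) that bracket_mem_swap[OF I(1), of z x] unfolding rel_center_def by blast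
  moreover have "add_subgroup {w. \<forall>x\<in>G. br x w \<in> I}"
    using I(1) by (auto simp: add_subgroup_def bracket_add_right bracket_minus_right)
  ultimately have "?J \<subseteq> {w. \<forall>x\<in>G. br x w \<in> I}"
    using I(3) by (intro hull_minimal) auto
  moreover have "I \<subseteq> ?J" using hull_subset[of "insert z I" add_subgroup] by blast
  ultimately have "\<forall>x\<in>G. \<forall>i\<in>?J. br x i \<in> ?J" by blast
  moreover have "?J \<subseteq> {w. f w = 1}"
    using z(2) I(4) by (intro hull_minimal add_subgroup_dual_char_kernel[OF dual_char]) auto
  moreover have "?J \<subseteq> G" using G(1) I(2) zG by (intro hull_minimal) auto
  ultimately show ?thesis
    using G add_subgroup_hull[of "insert z I"] unfolding isotropic_ideal_def by blast
qed

lemma card_diff_hull_insert_less: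
  assumes "finite G" and ideal: "isotropic_ideal G I" and z: "z \<in> rel_center G I" "z \<notin> I" "f z = 1"
  shows "card G - card (add_subgroup hull insert z I) < card G - card I"
proof -
  let ?J = "add_subgroup hull insert z I"
  have "?J \<subseteq> G" using isotropic_ideal_hull_insert[OF ideal z(1,3)] unfolding isotropic_ideal_def by blast
  then have "finite ?J" "card ?J \<le> card G" using \<open>finite G\<close> by (auto intro: finite_subset card_mono)
  moreover have "I \<subset> ?J" using z(2) hull_subset[of "insert z I" add_subgroup] by blast
  ultimately show ?thesis using psubset_card_mono[of ?J I] by linarith
qed

lemma exists_bracket_into_rel_center:
  assumes nilpotent: "nilpotent_lie br" and ideal: "isotropic_ideal G I"
    and noncentral: "\<not> G \<subseteq> rel_center G I"
  shows "\<exists>y\<in>G. y \<notin> rel_center G I \<and> (\<forall>x\<in>G. br y x \<in> rel_center G I)"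
proof (rule ccontr)
  assume none: "\<not> ?thesis"
  have "\<exists>y\<in>G. y \<notin> rel_center G I \<and> y \<in> lower_central br k" for k
  proof (induction k)
    case 0
    then show ?case using noncentral by auto
  next
    case (Suc k)
    then obtain y where y: "y \<in> G" "y \<notin> rel_center G I" "y \<in> lower_central br k" by blast
    then obtain x where x: "x \<in> G" "br y x \<notin> rel_center G I" using none by blast
    have "br x y \<in> lower_central br (Suc k)"
      using bracket_mem_lie_bracket_set[of x UNIV y "lower_central br k" br] y(3) by simp
    then have "br y x \<in> lower_central br (Suc k)"
      unfolding lower_central.simps lie_bracket_set_eq_hull by (rule bracket_mem_swap[OF add_subgroup_hull])
    moreover have "br y x \<in> G" using ideal x y unfolding isotropic_ideal_def by blast
    ultimately show ?case using x by blast
  qed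
  moreover obtain k where "lower_central br k = {0}"
    using nilpotent unfolding nilpotent_lie_def by blast
  ultimately obtain y where "y \<notin> rel_center G I" "y = 0" by blast
  then show False using add_subgroup_zero[OF add_subgroup_rel_center[OF ideal]] by simp
qed

end

section \<open>Descent to a centralizer modulo an ideal\<close>

locale centralizer_step = lie_character br f
  for br :: "'a::ab_group_add \<Rightarrow> 'a \<Rightarrow> 'a" and f :: "'a \<Rightarrow> complex" +
  fixes G I :: "'a set" and y :: 'a
  assumes ideal: "isotropic_ideal G I" and finite_G: "finite G"
    and rel_center_kernel: "\<And>z. z \<in> rel_center G I \<Longrightarrow> f z = 1 \<Longrightarrow> z \<in> I"
    and y_mem: "y \<in> G" and bracket_y: "\<And>x. x \<in> G \<Longrightarrow> br y x \<in> rel_center G I"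
begin

abbreviation G\<^sub>0 :: "'a set" where "G\<^sub>0 \<equiv> rel_centralizer y G I"

lemma G_subgroup: "add_subgroup G"
  and G_bracket_closed: "a \<in> G \<Longrightarrow> b \<in> G \<Longrightarrow> br a b \<in> G"
  and I_subgroup: "add_subgroup I"
  and I_bracket_closed: "x \<in> G \<Longrightarrow> i \<in> I \<Longrightarrow> br x i \<in> I"
  and I_kernel: "i \<in> I \<Longrightarrow> f i = 1"
  using ideal unfolding isotropic_ideal_def by blast+

lemma rel_centralizer_subset: "G\<^sub>0 \<subseteq> G"
  unfolding rel_centralizer_def by blast

lemma bracket_mem_rel_centralizer:
  assumes a: "a \<in> G" and b: "b \<in> G\<^sub>0"
  shows "br a b \<in> G\<^sub>0"
proof -
  have bG: "b \<in> G" and yb: "br y b \<in> I" using b unfolding rel_centralizer_def by auto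
  have "br (br y a) b \<in> I" using bracket_y[OF a] bG unfolding rel_center_def by blast
  moreover have "br a (br y b) \<in> I" using I_bracket_closed[OF a yb] .
  ultimately have "br y (br a b) \<in> I"
    using bracket_leibniz[of y a b] add_subgroup_add[OF I_subgroup] by simp
  then show ?thesis using G_bracket_closed[OF a bG] unfolding rel_centralizer_def by blast
qed

lemma mem_rel_centralizer_if_orthogonal: "x \<in> G \<Longrightarrow> f (br y x) = 1 \<Longrightarrow> x \<in> G\<^sub>0"
  using rel_center_kernel bracket_y unfolding rel_centralizer_def by blast

lemma rel_center_subset_rel_centralizer: "rel_center G I \<subseteq> G\<^sub>0"
proof
  fix z assume "z \<in> rel_center G I"
  then have "z \<in> G" "br z y \<in> I" using y_mem unfolding rel_center_def by auto
  then show "z \<in> G\<^sub>0" using bracket_mem_swap[OF I_subgroup, of z y] unfolding rel_centralizer_def by blast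
qed

lemma y_mem_rel_centralizer: "y \<in> G\<^sub>0"
  using y_mem add_subgroup_zero[OF I_subgroup] unfolding rel_centralizer_def by simp

lemma isotropic_ideal_rel_centralizer: "isotropic_ideal G\<^sub>0 I"
proof -
  have "add_subgroup G\<^sub>0"
    using G_subgroup I_subgroup unfolding rel_centralizer_def add_subgroup_def
    by (auto simp: bracket_add_right bracket_minus_right)
  moreover have "I \<subseteq> G\<^sub>0"
    using ideal_subset_rel_center[OF ideal] rel_center_subset_rel_centralizer by blast
  ultimately show ?thesis
    using bracket_mem_rel_centralizer rel_centralizer_subset I_subgroup I_bracket_closed I_kernel
    unfolding isotropic_ideal_def by blast
qed

lemma card_diff_rel_centralizer_less:
  assumes "y \<notin> rel_center G I"
  shows "card G\<^sub>0 - card I < card G - card I"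
proof -
  obtain x where "x \<in> G" "br y x \<notin> I" using assms y_mem unfolding rel_center_def by blast
  then have "G\<^sub>0 \<subset> G" using rel_centralizer_subset unfolding rel_centralizer_def by blast
  then have "card G\<^sub>0 < card G" using finite_G by (rule psubset_card_mono[rotated])
  moreover have "card I \<le> card G\<^sub>0"
    using isotropic_ideal_rel_centralizer finite_subset[OF rel_centralizer_subset finite_G]
    unfolding isotropic_ideal_def by (meson card_mono)
  ultimately show ?thesis by linarith
qed

lemma rel_polarization_if_rel_polarization_rel_centralizer:
  assumes Q: "rel_polarization G\<^sub>0 Q"
  shows "rel_polarization G Q"
proof -
  have QG\<^sub>0: "Q \<subseteq> G\<^sub>0" using Q unfolding rel_polarization_def by blast
  have "f (br a y) = 1" if "a \<in> Q" for a
  proof -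
    have "br y a \<in> I" using QG\<^sub>0 that unfolding rel_centralizer_def by blast
    then show ?thesis using I_kernel f_bracket_swap[of y a] by blast
  qed
  then have "y \<in> Q" using Q y_mem_rel_centralizer unfolding rel_polarization_def by blast
  then have "x \<in> Q" if "x \<in> G" "\<forall>a\<in>Q. f (br a x) = 1" for x
    using that Q mem_rel_centralizer_if_orthogonal unfolding rel_polarization_def by blast
  then show ?thesis using Q rel_centralizer_subset unfolding rel_polarization_def by blast
qed

definition reduct :: "'a set \<Rightarrow> 'a set" where
  "reduct P = add_subgroup hull insert y (P \<inter> G\<^sub>0)"

lemma bracket_reduct:
  assumes P: "rel_polarization G P" and a: "a \<in> reduct P" and b: "b \<in> reduct P"
  shows "br a b \<in> P \<inter> G\<^sub>0 \<and> f (br a b) = 1"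
proof -
  let ?R = "P \<inter> G\<^sub>0 \<inter> {w. f w = 1}"
  have R: "add_subgroup ?R"
    using P isotropic_ideal_rel_centralizer add_subgroup_dual_char_kernel[OF dual_char]
    unfolding rel_polarization_def isotropic_ideal_def by (blast intro: add_subgroup_Int)
  have "I \<subseteq> P"
    using ideal_subset_rel_center[OF ideal] rel_center_subset_rel_polarization[OF _ P] I_kernel by blast
  then have I_R: "I \<subseteq> ?R"
    using isotropic_ideal_rel_centralizer I_kernel unfolding isotropic_ideal_def by blast
  have "br y s \<in> ?R" if "s \<in> P \<inter> G\<^sub>0" for s
    using that I_R unfolding rel_centralizer_def by blast
  moreover have "br s t \<in> ?R" if "s \<in> P \<inter> G\<^sub>0" "t \<in> P \<inter> G\<^sub>0" for s t
    using that P bracket_mem_rel_centralizer rel_centralizer_subset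
    unfolding rel_polarization_def by blast
  ultimately show ?thesis
    using bracket_hull_insert_mem[OF R _ _ a[unfolded reduct_def] b[unfolded reduct_def]] by blast
qed

text \<open>Comparing \<open>x\<close> with \<open>y\<close> on \<open>P\<close> gives \<open>f [a, x] = f [a, y]\<^sup>j\<close>,
  so \<open>x - j y\<close> is orthogonal to \<open>P\<close> and lies in \<open>P \<inter> G\<^sub>0\<close>.\<close>
lemma reduct_maximal:
  assumes P: "rel_polarization G P" and x: "x \<in> G\<^sub>0" and orth: "\<forall>a\<in>reduct P. f (br a x) = 1"
  shows "x \<in> reduct P"
proof -
  have PG: "P \<subseteq> G" and P_subgroup: "add_subgroup P"
    and P_max: "\<And>w. w \<in> G \<Longrightarrow> \<forall>a\<in>P. f (br a w) = 1 \<Longrightarrow> w \<in> P"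
    using P unfolding rel_polarization_def by blast+
  have inc: "P \<inter> G\<^sub>0 \<subseteq> reduct P" "y \<in> reduct P"
    using hull_subset[of "insert y (P \<inter> G\<^sub>0)" add_subgroup] unfolding reduct_def by blast+
  have reduct_subgroup: "add_subgroup (reduct P)" unfolding reduct_def by (rule add_subgroup_hull)
  have "\<exists>j. \<forall>a\<in>P. f (br x a) = f (br y a) ^ j"
  proof (rule dual_char_eq_power_on_subgroup[OF dual_char_bracket dual_char_bracket P_subgroup])
    show "finite P" using PG finite_G by (rule finite_subset)
    fix a assume "a \<in> P" "f (br y a) = 1"
    then have "a \<in> reduct P" using PG inc(1) mem_rel_centralizer_if_orthogonal by blast
    then show "f (br x a) = 1" using orth f_bracket_swap[of x a] by blast
  qed
  then obtain j where j: "\<And>a. a \<in> P \<Longrightarrow> f (br x a) = f (br y a) ^ j" by blast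
  define w where "w = x - nat_scale j y"
  have w_G\<^sub>0: "w \<in> G\<^sub>0"
    unfolding w_def using isotropic_ideal_rel_centralizer x y_mem_rel_centralizer
    by (simp add: isotropic_ideal_def add_subgroup_diff add_subgroup_nat_scale)
  have "f (br w a) = 1" if "a \<in> P" for a
    using j[OF that] dual_char_nonzero[OF dual_char, of "br y a"]
    by (simp add: w_def bracket_diff_left bracket_nat_scale_left
        dual_char_diff[OF dual_char] dual_char_nat_scale[OF dual_char])
  then have "w \<in> P" using P_max w_G\<^sub>0 rel_centralizer_subset f_bracket_swap by blast
  then have "w \<in> reduct P" using w_G\<^sub>0 inc(1) by blast
  moreover have "nat_scale j y \<in> reduct P" using add_subgroup_nat_scale[OF reduct_subgroup inc(2)] .
  ultimately have "w + nat_scale j y \<in> reduct P" by (rule add_subgroup_add[OF reduct_subgroup])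
  then show ?thesis by (simp add: w_def)
qed

lemma rel_polarization_reduct:
  assumes P: "rel_polarization G P"
  shows "rel_polarization G\<^sub>0 (reduct P)"
proof -
  have "reduct P \<subseteq> G\<^sub>0"
    using isotropic_ideal_rel_centralizer y_mem_rel_centralizer unfolding reduct_def isotropic_ideal_def
    by (intro hull_minimal) auto
  moreover have "P \<inter> G\<^sub>0 \<subseteq> reduct P"
    using hull_subset[of "insert y (P \<inter> G\<^sub>0)" add_subgroup] unfolding reduct_def by blast
  ultimately show ?thesis
    using bracket_reduct[OF P] reduct_maximal[OF P] add_subgroup_hull
    unfolding rel_polarization_def reduct_def by blast
qed

lemma neighbors_reduct:
  assumes P: "rel_polarization G P"
  shows "neighbors br P (reduct P)"
  unfolding neighbors_def
proof (rule lie_bracket_set_subset)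
  have P_subgroup: "add_subgroup P" using P unfolding rel_polarization_def by blast
  have inc: "P \<inter> G\<^sub>0 \<subseteq> reduct P" "y \<in> reduct P"
    using hull_subset[of "insert y (P \<inter> G\<^sub>0)" add_subgroup] unfolding reduct_def by blast+
  show R: "add_subgroup (P \<inter> reduct P)"
    using P_subgroup add_subgroup_hull unfolding reduct_def by (rule add_subgroup_Int)
  fix a b assume a: "a \<in> P" and b: "b \<in> reduct P"
  have "br a s \<in> P \<inter> G\<^sub>0" if "s \<in> insert y (P \<inter> G\<^sub>0)" for s
  proof (cases "s = y")
    case True
    have "br y a \<in> rel_center G I" using bracket_y a P unfolding rel_polarization_def by blast
    then have "br a y \<in> rel_center G I"
      by (rule bracket_mem_swap[OF add_subgroup_rel_center[OF ideal]])
    then show ?thesis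
      using True rel_center_subset_rel_polarization[OF _ P] I_kernel rel_center_subset_rel_centralizer
      by blast
  next
    case False
    then show ?thesis
      using that a P bracket_mem_rel_centralizer rel_centralizer_subset
      unfolding rel_polarization_def by blast
  qed
  then have "b \<in> {b. br a b \<in> P \<inter> reduct P}"
    using hull_induct[OF b[unfolded reduct_def], of "\<lambda>b. br a b \<in> P \<inter> reduct P"] inc(1)
      add_subgroup_bracket_preimage_right[OF R] unfolding reduct_def by blast
  then show "br a b \<in> P \<inter> reduct P" by blast
qed

lemma polarizations_connected_via_reducts:
  assumes P: "rel_polarization G P1" "rel_polarization G P2"
    and "(polarization_neighbors G\<^sub>0)\<^sup>*\<^sup>* (reduct P1) (reduct P2)"
  shows "(polarization_neighbors G)\<^sup>*\<^sup>* P1 P2"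
proof -
  have "(polarization_neighbors G)\<^sup>*\<^sup>* (reduct P1) (reduct P2)"
    using assms(3) rel_polarization_if_rel_polarization_rel_centralizer
    by (induction rule: rtranclp_induct)
      (auto simp: polarization_neighbors_def intro: rtranclp.rtrancl_into_rtrancl)
  moreover have "polarization_neighbors G P (reduct P)" if "rel_polarization G P" for P
    using that neighbors_reduct rel_polarization_reduct rel_polarization_if_rel_polarization_rel_centralizer
    unfolding polarization_neighbors_def by blast
  moreover have "polarization_neighbors G (reduct P2) P2"
    using calculation(2)[OF P(2)] neighbors_sym unfolding polarization_neighbors_def rel_polarization_def
    by blast
  ultimately show ?thesis
    using P(1) by (meson converse_rtranclp_into_rtranclp rtranclp.rtrancl_into_rtrancl)
qed

end

context lie_character
begin

lemma rel_polarizations_connected: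
  assumes nilpotent: "nilpotent_lie br"
    and "finite G" "isotropic_ideal G I" "rel_polarization G P1" "rel_polarization G P2"
  shows "(polarization_neighbors G)\<^sup>*\<^sup>* P1 P2"
  using assms(2-)
proof (induction "card G - card I" arbitrary: G I P1 P2 rule: less_induct)
  case less
  note finite_G = less.prems(1) and ideal = less.prems(2) and P = less.prems(3,4)
  show ?case
  proof (cases "\<exists>z\<in>rel_center G I. z \<notin> I \<and> f z = 1")
    case True
    then obtain z where z: "z \<in> rel_center G I" "z \<notin> I" "f z = 1" by blast
    show ?thesis
      using less.hyps[OF card_diff_hull_insert_less[OF finite_G ideal z] finite_G
          isotropic_ideal_hull_insert[OF ideal z(1,3)] P] .
  next
    case False
    then have kernel: "\<And>z. z \<in> rel_center G I \<Longrightarrow> f z = 1 \<Longrightarrow> z \<in> I" by blast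
    show ?thesis
    proof (cases "G \<subseteq> rel_center G I")
      case True
      then have "P1 = P2" using rel_polarization_eq_if_central[OF ideal True] P by metis
      then show ?thesis by simp
    next
      case False
      then obtain y where y: "y \<in> G" "y \<notin> rel_center G I" "\<forall>x\<in>G. br y x \<in> rel_center G I"
        using exists_bracket_into_rel_center[OF nilpotent ideal] by blast
      interpret centralizer_step br f G I y
        using ideal finite_G kernel y by unfold_locales auto
      have "(polarization_neighbors G\<^sub>0)\<^sup>*\<^sup>* (reduct P1) (reduct P2)"
        using less.hyps[OF card_diff_rel_centralizer_less[OF y(2)]
            finite_subset[OF rel_centralizer_subset finite_G] isotropic_ideal_rel_centralizer]
          rel_polarization_reduct P by blast
      then show ?thesis using polarizations_connected_via_reducts P by blast
    qed
  qed
qed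

end

theorem lemma2p6:
  fixes br :: "'a::ab_group_add \<Rightarrow> 'a \<Rightarrow> 'a"
    and f :: "'a \<Rightarrow> complex"
    and p n :: nat
    and P1 P2 :: "'a set"
  assumes "prime p" and "odd p"
    and "lie_ring br"
    and "finite (UNIV :: 'a set)" and "card (UNIV :: 'a set) = p ^ n"
    and "nilpotent_lie br"
    and "dual_char f"
    and "polarization br f P1" and "polarization br f P2"
  shows "\<exists>qs. qs \<noteq> [] \<and> hd qs = P1 \<and> last qs = P2 \<and>
           (\<forall>q\<in>set qs. polarization br f q) \<and>
           (\<forall>i. Suc i < length qs \<longrightarrow> neighbors br (qs ! i) (qs ! Suc i))"
proof -
  interpret lie_character br f using assms(3,7) by unfold_locales
  have connected: "(polarization_neighbors UNIV)\<^sup>*\<^sup>* P1 P2"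
    using rel_polarizations_connected[OF assms(6,4) isotropic_ideal_UNIV_zero] assms(8,9)
    by (simp add: polarization_iff_rel_polarization_UNIV)
  obtain qs where qs: "qs \<noteq> []" "hd qs = P1" "last qs = P2"
      "set qs \<subseteq> {Q. (polarization_neighbors UNIV)\<^sup>*\<^sup>* P1 Q}"
      "\<forall>i. Suc i < length qs \<longrightarrow> polarization_neighbors UNIV (qs ! i) (qs ! Suc i)"
    using rtranclp_imp_chain[OF connected] by blast
  have "polarization br f q" if "q \<in> set qs" for q
  proof -
    have "(polarization_neighbors UNIV)\<^sup>*\<^sup>* P1 q" using qs(4) that by blast
    then show ?thesis
      using rel_polarization_rtranclp_polarization_neighbors assms(8)
      by (simp add: polarization_iff_rel_polarization_UNIV)
  qed
  moreover have "\<forall>i. Suc i < length qs \<longrightarrow> neighbors br (qs ! i) (qs ! Suc i)"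
    using qs(5) unfolding polarization_neighbors_def by blast
  ultimately show ?thesis using qs(1-3) by blast
qed

end
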